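(* Let $m,n$ be positive integers and $x>2$ real. Define $\alpha_j>0$ ($1\le j\le 2n-1$) and $\beta_k>0$ ($1\le k\le 2m-1$) by $$\cosh\alpha_j+\cos\frac{\pi j}{2n}=x=\cosh\beta_k+\cos\frac{\pi k}{2m}.$$ Then $$\prod_{j=1}^{2n-1}\left(\frac{\tanh(m\alpha_j)}{\sinh\alpha_j}\right)^{(-1)^j}=\prod_{k=1}^{2m-1}\left(\frac{\tanh(n\beta_k)}{\sinh\beta_k}\right)^{(-1)^k}.$$ *)

theory Defs
  imports "HOL-Analysis.Analysis"
begin

end

theory Submission
  imports Defs "HOL-Computational_Algebra.Fundamental_Theorem_Algebra"
begin

text \<open>
  Put \<open>z = exp a\<close> for \<open>a \<noteq> 0\<close>. Pairing complex conjugate \<open>4M\<close>-th roots of unity factors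
  \<open>z^4M - 1\<close> into the real quadratics \<open>z^2 - 2z cos (\<pi>k/2M) + 1 = 2z (cosh a - cos (\<pi>k/2M))\<close>,
  \<open>0 < k < 2M\<close>, times \<open>z^2 - 1\<close>. The factors with even \<open>k\<close> multiply to \<open>(z^2M - 1) / (z^2 - 1)\<close>,
  so those with odd \<open>k\<close> multiply to \<open>z^2M + 1\<close>, and the alternating product of the
  \<open>cosh a - cos (\<pi>k/2M)\<close> is \<open>tanh (M a) / sinh a\<close>. Substituting \<open>cosh \<alpha>_j = x - cos (\<pi>j/2n)\<close>
  turns both sides of the theorem into the same alternating double product of
  \<open>x - cos (\<pi>j/2n) - cos (\<pi>k/2m)\<close>.
\<close>

lemma power_minus_one_eq_prod_roots_unity:
  fixes w :: complex
  assumes "N > 0"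
  shows "w ^ N - 1 = (\<Prod>u | u ^ N = 1. w - u)"
proof -
  define p :: "complex poly" where "p = monom 1 N + [:-1:]"
  have poly_p: "poly p z = z ^ N - 1" for z
    by (simp add: p_def poly_monom)
  have poly_pderiv_p: "poly (pderiv p) z = of_nat N * z ^ (N - 1)" for z
    by (simp add: p_def pderiv_add pderiv_monom poly_monom)
  have "degree p = N"
    using assms unfolding p_def by (subst degree_add_eq_left) (auto simp: degree_monom_eq)
  then have lead: "lead_coeff p = 1"
    using assms by (cases N) (simp_all add: p_def)
  have "rsquarefree p"
    unfolding rsquarefree_roots
  proof (intro allI notI)
    fix u assume "poly p u = 0 \<and> poly (pderiv p) u = 0"
    then have "u ^ N = 1" "u ^ (N - 1) = 0"
      using assms by (auto simp: poly_p poly_pderiv_p)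
    then show False
      using assms by (auto simp: power_0_left)
  qed
  then have "smult (lead_coeff p) (\<Prod>u | poly p u = 0. [:-u, 1:]) = p"
    by (rule complex_poly_decompose_rsquarefree)
  then have "poly p w = poly (smult (lead_coeff p) (\<Prod>u | poly p u = 0. [:-u, 1:])) w"
    by simp
  then have "poly p w = (\<Prod>u | poly p u = 0. w - u)"
    using lead by (simp add: poly_prod)
  then show ?thesis
    by (simp add: poly_p)
qed

lemma prod_lessThan_double_conv_pairs:
  fixes g :: "nat \<Rightarrow> 'a::comm_monoid_mult"
  assumes "N > 0"
  shows "(\<Prod>k<2*N. g k) = g 0 * g N * (\<Prod>k\<in>{1..<N}. g k * g (2*N - k))"
proof -
  have split: "{..<2*N} = insert 0 (insert N ({1..<N} \<union> (\<lambda>k. 2*N - k) ` {1..<N}))"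
  proof (intro equalityI subsetI)
    fix k assume "k \<in> {..<2*N}"
    then have "k \<le> N \<or> (k = 2*N - (2*N - k) \<and> 2*N - k \<in> {1..<N})"
      by auto
    then show "k \<in> insert 0 (insert N ({1..<N} \<union> (\<lambda>k. 2*N - k) ` {1..<N}))"
      by auto
  qed (use assms in auto)
  have "inj_on (\<lambda>k. 2*N - k) {1..<N}"
    by (auto simp: inj_on_def)
  then have "(\<Prod>k\<in>(\<lambda>k. 2*N - k) ` {1..<N}. g k) = (\<Prod>k\<in>{1..<N}. g (2*N - k))"
    by (simp add: prod.reindex)
  moreover have "(\<Prod>k<2*N. g k)
      = g 0 * (g N * ((\<Prod>k\<in>{1..<N}. g k) * (\<Prod>k\<in>(\<lambda>k. 2*N - k) ` {1..<N}. g k)))"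
    unfolding split
    by (subst prod.insert; auto simp: assms)+ (subst prod.union_disjoint; auto simp: assms)
  ultimately show ?thesis
    by (simp add: prod.distrib mult_ac)
qed

lemma prod_atLeastLessThan_double_even_odd:
  fixes h :: "nat \<Rightarrow> 'a::comm_monoid_mult"
  shows "(\<Prod>k\<in>{1..<2*M}. h k) = (\<Prod>l\<in>{1..<M}. h (2*l)) * (\<Prod>l<M. h (2*l + 1))"
proof -
  have split: "{1..<2*M} = (\<lambda>l. 2*l) ` {1..<M} \<union> (\<lambda>l. 2*l + 1) ` {..<M}"
  proof (intro equalityI subsetI)
    fix k assume "k \<in> {1..<2*M}"
    then have "(k = 2 * (k div 2) \<and> k div 2 \<in> {1..<M}) \<or> (k = 2 * (k div 2) + 1 \<and> k div 2 \<in> {..<M})"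
      by auto
    then show "k \<in> (\<lambda>l. 2*l) ` {1..<M} \<union> (\<lambda>l. 2*l + 1) ` {..<M}"
      by blast
  qed auto
  have "(\<lambda>l. 2*l) ` {1..<M} \<inter> (\<lambda>l. 2*l + 1) ` {..<M} = {}"
    by auto presburger
  then show ?thesis
    unfolding split by (subst prod.union_disjoint) (auto simp: prod.reindex inj_on_def)
qed

lemma power_two_mult_minus_one_eq_prod_cos:
  fixes z :: real
  assumes "N > 0"
  shows "z ^ (2*N) - 1 = (z\<^sup>2 - 1) * (\<Prod>k\<in>{1..<N}. z\<^sup>2 - 2*z*cos (pi * real k / real N) + 1)"
proof -
  define w where "w = complex_of_real z"
  define g where "g k = w - cis (2 * pi * real k / real (2*N))" for k
  have "bij_betw (\<lambda>k. cis (2 * pi * real k / real (2*N))) {..<2*N} {u. u ^ (2*N) = 1}"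
    using assms by (intro Complex.bij_betw_roots_unity) simp
  then have "(\<Prod>u | u ^ (2*N) = 1. w - u) = (\<Prod>k<2*N. g k)"
    unfolding g_def by (rule prod.reindex_bij_betw[symmetric])
  then have "w ^ (2*N) - 1 = (\<Prod>k<2*N. g k)"
    using assms by (simp add: power_minus_one_eq_prod_roots_unity)
  also have "\<dots> = g 0 * g N * (\<Prod>k\<in>{1..<N}. g k * g (2*N - k))"
    using assms by (rule prod_lessThan_double_conv_pairs)
  also have "g 0 * g N = of_real (z\<^sup>2 - 1)"
    using assms by (simp add: g_def w_def complex_eq_iff power2_eq_square algebra_simps)
  also have "(\<Prod>k\<in>{1..<N}. g k * g (2*N - k))
      = (\<Prod>k\<in>{1..<N}. of_real (z\<^sup>2 - 2*z*cos (pi * real k / real N) + 1))"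
  proof (intro prod.cong refl)
    fix k assume k: "k \<in> {1..<N}"
    define c where "c = cis (pi * real k / real N)"
    have "2 * pi * real (2*N - k) / real (2*N) = 2*pi - pi * real k / real N"
      using k by (simp add: of_nat_diff field_simps)
    then have conj_root: "g (2*N - k) = w - cnj c"
      by (simp add: g_def c_def complex_eq_iff cos_diff sin_diff)
    have root: "g k = w - c"
      using assms by (simp add: g_def c_def)
    show "g k * g (2*N - k) = of_real (z\<^sup>2 - 2*z*cos (pi * real k / real N) + 1)"
      unfolding root conj_root
      by (simp add: c_def w_def complex_eq_iff power2_eq_square algebra_simps sin_squared_eq)
  qed
  finally have "of_real (z ^ (2*N) - 1)
      = (of_real ((z\<^sup>2 - 1) * (\<Prod>k\<in>{1..<N}. z\<^sup>2 - 2*z*cos (pi * real k / real N) + 1)) :: complex)"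
    by (simp add: w_def)
  then show ?thesis
    by (simp only: of_real_eq_iff)
qed

lemma power_two_mult_plus_one_eq_prod_cos:
  fixes z :: real
  assumes "N > 0" and "\<bar>z\<bar> \<noteq> 1"
  shows "z ^ (2*N) + 1 = (\<Prod>k<N. z\<^sup>2 - 2*z*cos (pi * real (2*k + 1) / real (2*N)) + 1)"
proof -
  define q where "q k = z\<^sup>2 - 2*z*cos (pi * real k / real (2*N)) + 1" for k
  have even: "z ^ (2*N) - 1 = (z\<^sup>2 - 1) * (\<Prod>k\<in>{1..<N}. q (2*k))"
    using power_two_mult_minus_one_eq_prod_cos[OF assms(1)] by (simp add: q_def)
  have "z ^ (2*(2*N)) = (z ^ (2*N))\<^sup>2"
    by (metis mult.commute power_mult)
  then have "(z ^ (2*N) - 1) * (z ^ (2*N) + 1) = z ^ (2*(2*N)) - 1"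
    by (simp add: power2_eq_square algebra_simps)
  also have "\<dots> = (z\<^sup>2 - 1) * (\<Prod>k\<in>{1..<2*N}. q k)"
    using assms(1) power_two_mult_minus_one_eq_prod_cos[of "2*N" z] by (simp add: q_def)
  also have "\<dots> = (z ^ (2*N) - 1) * (\<Prod>k<N. q (2*k + 1))"
    unfolding prod_atLeastLessThan_double_even_odd even by (simp only: mult.assoc)
  finally have "(z ^ (2*N) - 1) * (z ^ (2*N) + 1) = (z ^ (2*N) - 1) * (\<Prod>k<N. q (2*k + 1))" .
  moreover have "\<bar>z\<bar> ^ (2*N) \<noteq> 1 ^ (2*N)"
    using assms by (subst power_eq_iff_eq_base) auto
  then have "z ^ (2*N) \<noteq> 1"
    by (simp add: power_even_abs)
  ultimately show ?thesis
    by (simp add: q_def)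
qed

lemma tanh_mult_div_sinh_eq_exp:
  fixes a :: real
  assumes "a \<noteq> 0"
  shows "tanh (real M * a) / sinh a
       = (exp a ^ (2*M) - 1) / (exp a ^ (2*M) + 1) / ((exp a ^ 2 - 1) / (2 * exp a))"
proof -
  define z where "z = exp a"
  have "z > 0"
    by (simp add: z_def)
  have "tanh (real M * a) / sinh a = tanh (ln (z ^ M)) / sinh (ln z)"
    by (simp add: ln_realpow z_def)
  also have "\<dots> = ((z ^ M)\<^sup>2 - 1) / ((z ^ M)\<^sup>2 + 1) / ((z - inverse z) / 2)"
    using \<open>z > 0\<close> by (simp add: tanh_ln_real sinh_ln_real)
  also have "(z ^ M)\<^sup>2 = z ^ (2*M)"
    by (metis mult.commute power_mult)
  also have "(z - inverse z) / 2 = (z\<^sup>2 - 1) / (2*z)"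
    using \<open>z > 0\<close> by (simp add: field_simps power2_eq_square)
  finally show ?thesis
    by (simp only: z_def)
qed

lemma tanh_mult_div_sinh_eq_prod_cosh_minus_cos:
  fixes a :: real
  assumes "a \<noteq> 0" and "M > 0"
  shows "tanh (real M * a) / sinh a
       = (\<Prod>k=1..2*M-1. (cosh a - cos (pi * real k / (2 * real M))) powi ((-1) ^ k))"
proof -
  define z where "z = exp a"
  have z: "z > 0" "z \<noteq> 1"
    using assms(1) by (auto simp: z_def)
  define q where "q k = z\<^sup>2 - 2*z*cos (pi * real k / real (2*M)) + 1" for k
  have cosh_minus_cos: "cosh a - cos (pi * real k / (2 * real M)) = q k / (2*z)" for k
    using z by (simp add: q_def z_def cosh_def exp_minus field_simps power2_eq_square)
  have "z\<^sup>2 \<noteq> 1"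
    using z by (simp add: power2_eq_1_iff)
  then have even: "(\<Prod>l\<in>{1..<M}. q (2*l)) = (z ^ (2*M) - 1) / (z\<^sup>2 - 1)"
    using power_two_mult_minus_one_eq_prod_cos[OF assms(2), of z] by (simp add: q_def field_simps)
  have odd: "(\<Prod>l<M. q (2*l + 1)) = z ^ (2*M) + 1"
    using power_two_mult_plus_one_eq_prod_cos[OF assms(2), of z] z by (simp add: q_def)
  have "(\<Prod>k=1..2*M-1. (cosh a - cos (pi * real k / (2 * real M))) powi ((-1) ^ k))
      = (\<Prod>k\<in>{1..<2*M}. (q k / (2*z)) powi ((-1) ^ k))"
    using assms(2) by (intro prod.cong) (auto simp: cosh_minus_cos)
  also have "\<dots> = (\<Prod>l\<in>{1..<M}. q (2*l) / (2*z)) * (\<Prod>l<M. inverse (q (2*l + 1) / (2*z)))"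
    by (subst prod_atLeastLessThan_double_even_odd) (simp add: power_int_minus)
  also have "\<dots> = ((z ^ (2*M) - 1) / (z\<^sup>2 - 1) / (2*z) ^ (M - 1)) * ((2*z) ^ M / (z ^ (2*M) + 1))"
    unfolding prod_inversef[unfolded comp_def] prod_dividef even odd by simp
  also have "\<dots> = (z ^ (2*M) - 1) / (z ^ (2*M) + 1) / ((z\<^sup>2 - 1) / (2*z))"
  proof -
    have cancel: "X / w / P * (2*z*P / Y) = X / Y / (w / (2*z))"
      if "w \<noteq> 0" "Y \<noteq> 0" "P \<noteq> 0" for X Y w P :: real
      using that z by (simp add: field_simps)
    have split_power: "(2*z) ^ M = 2*z * (2*z) ^ (M - 1)"
      using assms(2) by (simp add: power_eq_if)
    have "z ^ (2*M) + 1 \<noteq> 0"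
      using zero_less_power[OF z(1), of "2*M"] by linarith
    then show ?thesis
      unfolding split_power using z \<open>z\<^sup>2 \<noteq> 1\<close> by (intro cancel) auto
  qed
  also have "\<dots> = tanh (real M * a) / sinh a"
    unfolding z_def by (rule tanh_mult_div_sinh_eq_exp[OF assms(1), symmetric])
  finally show ?thesis ..
qed

lemma prod_power_int_distrib:
  fixes f :: "'a \<Rightarrow> 'b::field"
  shows "(\<Prod>i\<in>A. f i) powi e = (\<Prod>i\<in>A. f i powi e)"
  by (induction A rule: infinite_finite_induct) (simp_all add: power_int_mult_distrib)

lemma alternating_prod_tanh_div_sinh_eq_double_prod:
  fixes m n :: nat and x :: real and \<alpha> :: "nat \<Rightarrow> real"
  assumes "m > 0"
    and "\<And>j. j \<in> {1..2*n-1} \<Longrightarrow> \<alpha> j \<noteq> 0 \<and> cosh (\<alpha> j) + cos (pi * real j / (2 * real n)) = x"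
  shows "(\<Prod>j=1..2*n-1. (tanh (real m * \<alpha> j) / sinh (\<alpha> j)) powi ((-1) ^ j))
       = (\<Prod>j=1..2*n-1. \<Prod>k=1..2*m-1.
            (x - cos (pi * real j / (2 * real n)) - cos (pi * real k / (2 * real m))) powi ((-1) ^ (j + k)))"
proof (intro prod.cong refl)
  fix j assume "j \<in> {1..2*n-1}"
  then have "\<alpha> j \<noteq> 0" and cosh_\<alpha>: "cosh (\<alpha> j) = x - cos (pi * real j / (2 * real n))"
    using assms(2) by (auto simp: algebra_simps)
  then show "(tanh (real m * \<alpha> j) / sinh (\<alpha> j)) powi ((-1) ^ j)
      = (\<Prod>k=1..2*m-1. (x - cos (pi * real j / (2 * real n)) - cos (pi * real k / (2 * real m)))
           powi ((-1) ^ (j + k)))"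
    using assms(1)
    by (simp add: tanh_mult_div_sinh_eq_prod_cosh_minus_cos cosh_\<alpha> prod_power_int_distrib
        power_int_mult power_add mult.commute)
qed

theorem mainTheorem14:
  fixes m n :: nat and x :: real and \<alpha> \<beta> :: "nat \<Rightarrow> real"
  assumes "m > 0" and "n > 0" and "x > 2"
    and "\<And>j. 1 \<le> j \<Longrightarrow> j \<le> 2*n - 1 \<Longrightarrow>
           \<alpha> j > 0 \<and> cosh (\<alpha> j) + cos (pi * real j / (2 * real n)) = x"
    and "\<And>k. 1 \<le> k \<Longrightarrow> k \<le> 2*m - 1 \<Longrightarrow>
           \<beta> k > 0 \<and> cosh (\<beta> k) + cos (pi * real k / (2 * real m)) = x"
  shows "(\<Prod>j=1..2*n-1. (tanh (real m * \<alpha> j) / sinh (\<alpha> j)) powi ((-1) ^ j))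
       = (\<Prod>k=1..2*m-1. (tanh (real n * \<beta> k) / sinh (\<beta> k)) powi ((-1) ^ k))"
proof -
  \<comment> \<open>The hypothesis \<open>x > 2\<close> only guarantees that the \<open>\<alpha> j\<close> and \<open>\<beta> k\<close> exist.\<close>
  have "(\<Prod>j=1..2*n-1. (tanh (real m * \<alpha> j) / sinh (\<alpha> j)) powi ((-1) ^ j))
      = (\<Prod>j=1..2*n-1. \<Prod>k=1..2*m-1.
           (x - cos (pi * real j / (2 * real n)) - cos (pi * real k / (2 * real m))) powi ((-1) ^ (j + k)))"
    using assms(1,4) by (intro alternating_prod_tanh_div_sinh_eq_double_prod) fastforce+
  also have "\<dots> = (\<Prod>k=1..2*m-1. \<Prod>j=1..2*n-1.
           (x - cos (pi * real k / (2 * real m)) - cos (pi * real j / (2 * real n))) powi ((-1) ^ (k + j)))"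
    by (subst prod.swap) (simp add: algebra_simps)
  also have "\<dots> = (\<Prod>k=1..2*m-1. (tanh (real n * \<beta> k) / sinh (\<beta> k)) powi ((-1) ^ k))"
    using assms(2,5) by (intro alternating_prod_tanh_div_sinh_eq_double_prod[symmetric]) fastforce+
  finally show ?thesis .
qed

end
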